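(* Every indecomposable continuum $X$ that is $d(X)$-Baire is coastal: for every $x\in X$ there exists $p\in X$ with $p\neq x$ such that $\kappa(x;p)$ is dense in $X$.
   Context: A continuum is a nondegenerate compact connected Hausdorff space; it is indecomposable if it is not the union of two proper subcontinua. $d(X)$ is the least cardinality of a dense subset of $X$; $X$ is $\alpha$-Baire if every family of $\alpha$ many open dense subsets has dense intersection. $\kappa(x;p)$ denotes the union of all subcontinua $M$ of $X$ with $x\in M$, $M\neq X$ and $p\notin M$. *)

theory Defs
  imports "HOL-Analysis.Analysis" "HOL-Library.Equipollence"
begin

definition nondegenerate_in :: "'a topology \<Rightarrow> 'a set \<Rightarrow> bool" where
  "nondegenerate_in X M \<longleftrightarrow> (\<exists>a\<in>M. \<exists>b\<in>M. a \<noteq> b)"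

definition continuum :: "'a topology \<Rightarrow> bool" where
  "continuum X \<longleftrightarrow> Hausdorff_space X \<and> compact_space X \<and> connected_space X
     \<and> nondegenerate_in X (topspace X)"

definition subcontinuum :: "'a topology \<Rightarrow> 'a set \<Rightarrow> bool" where
  "subcontinuum X M \<longleftrightarrow> M \<subseteq> topspace X \<and> continuum (subtopology X M)"

definition indecomposable :: "'a topology \<Rightarrow> bool" where
  "indecomposable X \<longleftrightarrow> continuum X \<and>
     \<not> (\<exists>A B. subcontinuum X A \<and> A \<noteq> topspace X \<and> subcontinuum X B \<and> B \<noteq> topspace X
            \<and> A \<union> B = topspace X)"

definition dense_in :: "'a topology \<Rightarrow> 'a set \<Rightarrow> bool" where
  "dense_in X S \<longleftrightarrow> S \<subseteq> topspace X \<and> X closure_of S = topspace X"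

text \<open>X is alpha-Baire, where the cardinal alpha is given as the cardinality of the set A.\<close>
definition card_Baire :: "'a topology \<Rightarrow> 'b set \<Rightarrow> bool" where
  "card_Baire X A \<longleftrightarrow> (\<forall>\<F>. \<F> \<lesssim> A \<and> (\<forall>U\<in>\<F>. openin X U \<and> dense_in X U)
      \<longrightarrow> dense_in X (topspace X \<inter> \<Inter>\<F>))"

text \<open>X is d(X)-Baire: taking a dense set D of least cardinality, X is |D|-Baire.\<close>
definition density_Baire :: "'a topology \<Rightarrow> bool" where
  "density_Baire X \<longleftrightarrow> (\<exists>D. dense_in X D \<and> (\<forall>D'. dense_in X D' \<longrightarrow> D \<lesssim> D')
      \<and> card_Baire X D)"

definition kappa :: "'a topology \<Rightarrow> 'a \<Rightarrow> 'a \<Rightarrow> 'a set" where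
  "kappa X x p = \<Union>{M. subcontinuum X M \<and> x \<in> M \<and> M \<noteq> topspace X \<and> p \<notin> M}"

definition coastal :: "'a topology \<Rightarrow> bool" where
  "coastal X \<longleftrightarrow> (\<forall>x\<in>topspace X. \<exists>p\<in>topspace X. p \<noteq> x \<and> dense_in X (kappa X x p))"

end

theory Submission
  imports Defs
begin

(* In an indecomposable continuum every proper subcontinuum is nowhere dense, while the
   composant of x (the union of the proper subcontinua through x) is dense by boundary bumping.
   Take a dense set D such that X is |D|-Baire. If some point p of D lies outside the composant
   of x, then kappa(x;p) is the whole composant. Otherwise each d in D lies in a proper
   subcontinuum M_d through x; the complements of the M_d are |D| many open dense sets, so the
   Baire property yields a point p outside all M_d, and then D is contained in kappa(x;p). *)

lemma subcontinuum_iff: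
  assumes "Hausdorff_space X" "compact_space X"
  shows "subcontinuum X M \<longleftrightarrow> closedin X M \<and> connectedin X M \<and> (\<exists>a\<in>M. \<exists>b\<in>M. a \<noteq> b)"
proof -
  have "M \<subseteq> topspace X \<Longrightarrow> compact_space (subtopology X M) \<longleftrightarrow> closedin X M"
    using assms compactin_subspace closedin_compact_space compactin_imp_closedin by blast
  then show ?thesis
    unfolding subcontinuum_def continuum_def nondegenerate_in_def connectedin_def
    using assms(1) Hausdorff_space_subtopology closedin_subset by (auto simp: Int_absorb1) blast
qed

lemma continuum_open_nondegenerate:
  assumes "continuum X" "openin X U" "U \<noteq> {}"
  shows "\<exists>a\<in>U. \<exists>b\<in>U. a \<noteq> b"
proof (rule ccontr)
  assume "\<not> ?thesis"
  then obtain q where q: "U = {q}" using assms(3) by blast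
  then have "q \<in> topspace X" using openin_subset[OF assms(2)] by blast
  moreover have "t1_space X"
    using assms(1) Hausdorff_imp_t1_space unfolding continuum_def by blast
  ultimately have "closedin X U"
    unfolding q by (rule closedin_t1_singleton[rotated])
  then have "topspace X = {q}"
    using q assms(1,2) connected_space_clopen_in by (auto simp: continuum_def)
  then show False using assms(1) by (auto simp: continuum_def nondegenerate_in_def)
qed

lemma boundary_bumping_connectedin:
  assumes "Hausdorff_space X" "compact_space X" "connected_space X"
    and "closedin X S" "S \<noteq> topspace X" "x \<in> S"
  obtains C where "closedin X C" "connectedin X C" "x \<in> C" "C \<subseteq> S" "C \<inter> X frontier_of S \<noteq> {}"
proof -
  define C where "C = connected_component_of_set (subtopology X S) x"
  have x: "x \<in> topspace (subtopology X S)"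
    using assms(4,6) closedin_subset by auto
  have "C \<in> connected_components_of (subtopology X S)"
    using x by (simp add: C_def connected_component_in_connected_components_of)
  then have "C \<inter> X frontier_of S \<noteq> {}"
    by (rule boundary_bumping_theorem_closed[OF assms(3,2,1,4,5)])
  moreover have "x \<in> C"
    using x by (simp add: C_def connected_component_of_refl)
  moreover have "closedin X C"
    unfolding C_def by (rule closedin_trans_full[OF closedin_connected_component_of assms(4)])
  moreover have "connectedin X C" "C \<subseteq> S"
    using connectedin_connected_component_of[of "subtopology X S" x]
    by (auto simp: C_def connectedin_subtopology)
  ultimately show thesis using that by blast
qed

lemma proper_subcontinuum_meets_open:
  assumes X: "Hausdorff_space X" "compact_space X" "connected_space X"
    and x: "x \<in> topspace X" and V: "openin X V" "y \<in> V" "y \<noteq> x"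
  obtains M where "subcontinuum X M" "x \<in> M" "M \<noteq> topspace X" "M \<inter> V \<noteq> {}"
proof -
  have "closedin X {x}"
    using closedin_t1_singleton[OF Hausdorff_imp_t1_space[OF X(1)] x] .
  then have "closedin X (topspace X - (V - {x}))"
    using V(1) by (intro closedin_diff closedin_topspace openin_diff)
  moreover have "y \<in> topspace X - (topspace X - (V - {x}))"
    using V openin_subset by fastforce
  ultimately obtain U where U: "openin X U" "y \<in> U"
      and "disjnt (topspace X - (V - {x})) (X closure_of U)"
    using compact_Hausdorff_imp_regular_space[OF X(2,1)] unfolding regular_space by blast
  then have clU: "X closure_of U \<subseteq> V - {x}"
    using closure_of_subset_topspace[of X U] by (auto simp: disjnt_def)
  define S where "S = topspace X - U"
  have Ut: "U \<subseteq> topspace X"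
    using U(1) by (rule openin_subset)
  have S: "closedin X S" "S \<noteq> topspace X" "x \<in> S"
    using U clU x Ut closure_of_subset[OF Ut] unfolding S_def by auto
  then obtain C where C: "closedin X C" "connectedin X C" "x \<in> C" "C \<subseteq> S"
      and "C \<inter> X frontier_of S \<noteq> {}"
    by (rule boundary_bumping_connectedin[OF X])
  moreover have "X frontier_of S \<subseteq> X closure_of U"
    using frontier_of_closures[of X S] Ut by (simp add: S_def Diff_Diff_Int Int_absorb1)
  ultimately obtain z where "z \<in> C" "z \<in> V" "z \<noteq> x"
    using clU by blast
  then have "subcontinuum X C"
    using C subcontinuum_iff[OF X(1,2)] by blast
  moreover have "C \<noteq> topspace X"
    using C(4) U(2) Ut unfolding S_def by blast
  ultimately show thesis
    using that C(3) \<open>z \<in> C\<close> \<open>z \<in> V\<close> by blast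
qed

definition composant :: "'a topology \<Rightarrow> 'a \<Rightarrow> 'a set" where
  "composant X x = \<Union>{M. subcontinuum X M \<and> x \<in> M \<and> M \<noteq> topspace X}"

lemma composant_subset_topspace: "composant X x \<subseteq> topspace X"
  by (auto simp: composant_def subcontinuum_def)

lemma kappa_subset_topspace: "kappa X x p \<subseteq> topspace X"
  by (auto simp: kappa_def subcontinuum_def)

lemma kappa_eq_composant:
  assumes "p \<notin> composant X x"
  shows "kappa X x p = composant X x"
  using assms unfolding kappa_def composant_def by blast

lemma composant_meets_open:
  assumes X: "continuum X" and "x \<in> topspace X" "openin X V" "V \<noteq> {}"
  shows "composant X x \<inter> V \<noteq> {}"
proof -
  obtain y where "y \<in> V" "y \<noteq> x"
    using continuum_open_nondegenerate[OF X assms(3,4)] by blast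
  then obtain M where "subcontinuum X M" "x \<in> M" "M \<noteq> topspace X" "M \<inter> V \<noteq> {}"
    using proper_subcontinuum_meets_open X assms(2,3) unfolding continuum_def by metis
  then show ?thesis
    unfolding composant_def by blast
qed

lemma dense_in_composant:
  assumes "continuum X" "x \<in> topspace X"
  shows "dense_in X (composant X x)"
  using composant_meets_open[OF assms] composant_subset_topspace
  by (simp add: dense_in_def dense_intersects_open)

lemma in_composant_self:
  assumes "continuum X" "x \<in> topspace X"
  shows "x \<in> composant X x"
  using composant_meets_open[OF assms openin_topspace] assms(2)
  unfolding composant_def by blast

lemma subcontinuum_Un_separated_open:
  assumes X: "Hausdorff_space X" "compact_space X" "connected_space X"
    and M: "subcontinuum X M"
    and U: "openin X U" "openin X V" "U \<inter> V = {}" "U \<union> V = topspace X - M" "V \<noteq> {}"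
  shows "subcontinuum X (M \<union> U)"
proof -
  have Mc: "closedin X M" "connectedin X M" and ab: "\<exists>a\<in>M. \<exists>b\<in>M. a \<noteq> b"
    using M subcontinuum_iff[OF X(1,2)] by auto
  have Mt: "M \<subseteq> topspace X" and Vt: "V \<subseteq> topspace X"
    using closedin_subset[OF Mc(1)] openin_subset[OF U(2)] .
  have A: "M \<union> U = topspace X - V"
    using U(3,4) Mt by blast
  have Ac: "closedin X (M \<union> U)" "M \<union> U \<noteq> topspace X"
    unfolding A using U(2,5) Vt by auto
  have "X frontier_of (M \<union> U) \<subseteq> X closure_of V"
    using frontier_of_closures[of X "M \<union> U"] Vt by (simp add: A Diff_Diff_Int Int_absorb1)
  moreover have "U \<inter> X closure_of V = {}"
    using openin_Int_closure_of_eq_empty[OF U(1)] U(3) by simp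
  ultimately have frontier: "X frontier_of (M \<union> U) \<subseteq> M"
    using frontier_of_subset_closedin[OF Ac(1)] by blast
  \<comment> \<open>Boundary bumping joins each point of \<open>M \<union> U\<close> to \<open>M\<close> inside \<open>M \<union> U\<close>.\<close>
  define \<C> where "\<C> = {C \<union> M | C. connectedin X C \<and> C \<subseteq> M \<union> U \<and> C \<inter> M \<noteq> {}}"
  have "\<Union>\<C> = M \<union> U"
  proof
    show "\<Union>\<C> \<subseteq> M \<union> U"
      unfolding \<C>_def by blast
    show "M \<union> U \<subseteq> \<Union>\<C>"
    proof
      fix y assume "y \<in> M \<union> U"
      then obtain C where "connectedin X C" "y \<in> C" "C \<subseteq> M \<union> U"
          and "C \<inter> X frontier_of (M \<union> U) \<noteq> {}"
        by (rule boundary_bumping_connectedin[OF X Ac])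
      then show "y \<in> \<Union>\<C>"
        using frontier unfolding \<C>_def by blast
    qed
  qed
  moreover have "connectedin X (\<Union>\<C>)"
  proof (rule connectedin_Union)
    show "connectedin X S" if "S \<in> \<C>" for S
      using that Mc(2) connectedin_Un unfolding \<C>_def by blast
    show "\<Inter>\<C> \<noteq> {}"
      using ab unfolding \<C>_def by blast
  qed
  ultimately show ?thesis
    using subcontinuum_iff[OF X(1,2)] Ac(1) ab by auto
qed

lemma indecomposable_dense_complement:
  assumes I: "indecomposable X" and M: "subcontinuum X M" "M \<noteq> topspace X"
  shows "X closure_of (topspace X - M) = topspace X"
proof (rule ccontr)
  assume not_dense: "X closure_of (topspace X - M) \<noteq> topspace X"
  have C: "continuum X" and X: "Hausdorff_space X" "compact_space X" "connected_space X"
    using I unfolding indecomposable_def continuum_def by auto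
  have no_cover: "A = topspace X \<or> B = topspace X"
    if "subcontinuum X A" "subcontinuum X B" "A \<union> B = topspace X" for A B
    using I that unfolding indecomposable_def by blast
  have Mt: "M \<subseteq> topspace X" and O: "openin X (topspace X - M)" "topspace X - M \<noteq> {}"
    using M subcontinuum_iff[OF X(1,2)] closedin_subset by auto
  show False
  proof (cases "connectedin X (topspace X - M)")
    case True
    let ?B = "X closure_of (topspace X - M)"
    have "topspace X - M \<subseteq> ?B"
      by (simp add: closure_of_subset)
    then have "subcontinuum X ?B"
      unfolding subcontinuum_iff[OF X(1,2)]
      using continuum_open_nondegenerate[OF C O] connectedin_closure_of[OF True] by auto
    moreover have "M \<union> ?B = topspace X"
      using \<open>topspace X - M \<subseteq> ?B\<close> Mt closure_of_subset_topspace[of X "topspace X - M"] by blast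
    ultimately show False
      using no_cover M not_dense by blast
  next
    case False
    then obtain E1 E2 where E: "openin X E1" "openin X E2" "topspace X - M \<subseteq> E1 \<union> E2"
        "E1 \<inter> E2 \<inter> (topspace X - M) = {}" "E1 \<inter> (topspace X - M) \<noteq> {}" "E2 \<inter> (topspace X - M) \<noteq> {}"
      unfolding connectedin by blast
    define U1 where "U1 = E1 \<inter> (topspace X - M)"
    define U2 where "U2 = E2 \<inter> (topspace X - M)"
    have U: "openin X U1" "openin X U2" "U1 \<inter> U2 = {}" "U1 \<union> U2 = topspace X - M"
      "U1 \<noteq> {}" "U2 \<noteq> {}"
      using E O(1) unfolding U1_def U2_def by auto
    have "subcontinuum X (M \<union> U1)"
      by (rule subcontinuum_Un_separated_open[OF X M(1) U(1-4,6)])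
    moreover have "subcontinuum X (M \<union> U2)"
      by (rule subcontinuum_Un_separated_open[OF X M(1) U(2,1)]) (use U in auto)
    moreover have "(M \<union> U1) \<union> (M \<union> U2) = topspace X"
      using U(4) Mt by blast
    moreover have "M \<union> U1 \<noteq> topspace X" "M \<union> U2 \<noteq> topspace X"
      using U by blast+
    ultimately show False
      using no_cover by blast
  qed
qed

lemma indecomposable_Baire_avoids_subcontinua:
  assumes I: "indecomposable X" and "card_Baire X D"
    and M: "\<And>d. d \<in> D \<Longrightarrow> subcontinuum X (M d) \<and> M d \<noteq> topspace X"
  obtains p where "p \<in> topspace X" "\<And>d. d \<in> D \<Longrightarrow> p \<notin> M d"
proof -
  have X: "Hausdorff_space X" "compact_space X" "topspace X \<noteq> {}"
    using I unfolding indecomposable_def continuum_def nondegenerate_in_def by auto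
  define \<F> where "\<F> = (\<lambda>d. topspace X - M d) ` D"
  have "openin X U \<and> dense_in X U" if "U \<in> \<F>" for U
  proof -
    obtain d where d: "d \<in> D" "U = topspace X - M d"
      using \<open>U \<in> \<F>\<close> unfolding \<F>_def by blast
    then have "closedin X (M d)"
      using M subcontinuum_iff[OF X(1,2)] by blast
    then show ?thesis
      using indecomposable_dense_complement[OF I] M d by (auto simp: dense_in_def)
  qed
  moreover have "\<F> \<lesssim> D"
    unfolding \<F>_def by (rule image_lepoll)
  ultimately have "dense_in X (topspace X \<inter> \<Inter>\<F>)"
    using \<open>card_Baire X D\<close> unfolding card_Baire_def by blast
  then have "topspace X \<inter> \<Inter>\<F> \<noteq> {}"
    using X(3) closure_of_empty unfolding dense_in_def by metis
  then show thesis
    using that unfolding \<F>_def by blast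
qed

lemma dense_in_superset:
  assumes "dense_in X D" "D \<subseteq> S" "S \<subseteq> topspace X"
  shows "dense_in X S"
  using assms closure_of_mono[OF assms(2)] closure_of_subset_topspace[of X S]
  unfolding dense_in_def by blast

lemma dense_kappa_outside_composant:
  assumes "continuum X" "x \<in> topspace X" "p \<notin> composant X x"
  shows "p \<noteq> x" "dense_in X (kappa X x p)"
  using in_composant_self[OF assms(1,2)] dense_in_composant[OF assms(1,2)] assms(3)
  by (auto simp: kappa_eq_composant)

lemma indecomposable_Baire_dense_kappa:
  assumes I: "indecomposable X" and D: "dense_in X D" "card_Baire X D"
    and x: "x \<in> topspace X" and "D \<subseteq> composant X x"
  obtains p where "p \<in> topspace X" "p \<noteq> x" "dense_in X (kappa X x p)"
proof -
  have "\<forall>d\<in>D. \<exists>M. subcontinuum X M \<and> M \<noteq> topspace X \<and> x \<in> M \<and> d \<in> M"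
    using \<open>D \<subseteq> composant X x\<close> unfolding composant_def by blast
  then obtain M where M: "\<And>d. d \<in> D \<Longrightarrow> subcontinuum X (M d) \<and> M d \<noteq> topspace X \<and> x \<in> M d \<and> d \<in> M d"
    by metis
  then have "\<And>d. d \<in> D \<Longrightarrow> subcontinuum X (M d) \<and> M d \<noteq> topspace X"
    by blast
  then obtain p where p: "p \<in> topspace X" "\<And>d. d \<in> D \<Longrightarrow> p \<notin> M d"
    by (rule indecomposable_Baire_avoids_subcontinua[OF I D(2)]) auto
  have "D \<subseteq> kappa X x p"
  proof
    fix d assume "d \<in> D"
    then show "d \<in> kappa X x p"
      using M[of d] p(2)[of d] unfolding kappa_def by auto
  qed
  then have "dense_in X (kappa X x p)"
    by (rule dense_in_superset[OF D(1) _ kappa_subset_topspace])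
  moreover obtain d where d: "d \<in> D"
    using D(1) x closure_of_empty unfolding dense_in_def by (metis empty_iff equals0I)
  then have "p \<noteq> x"
    using M[OF d] p(2)[OF d] by blast
  ultimately show thesis
    using that p(1) by blast
qed

theorem mainTheorem4:
  fixes X :: "'a topology"
  assumes "indecomposable X" and "density_Baire X"
  shows "coastal X"
  unfolding coastal_def
proof
  fix x assume x: "x \<in> topspace X"
  have X: "continuum X"
    using assms(1) by (simp add: indecomposable_def)
  obtain D where D: "dense_in X D" "card_Baire X D"
    using assms(2) unfolding density_Baire_def by blast
  show "\<exists>p\<in>topspace X. p \<noteq> x \<and> dense_in X (kappa X x p)"
  proof (cases "D \<subseteq> composant X x")
    case True
    then show ?thesis
      using indecomposable_Baire_dense_kappa[OF assms(1) D x] by metis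
  next
    case False
    then obtain p where "p \<in> D" "p \<notin> composant X x"
      by blast
    then show ?thesis
      using dense_kappa_outside_composant[OF X x] D(1) unfolding dense_in_def by blast
  qed
qed

end
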